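(* Let $\mathcal{U}$ be a Hilbert space, $\mathcal{W},\mathcal{Y}$ reflexive Banach spaces, $\mathcal{G}$ a Hilbert space, $g^\delta\in\mathcal{G}$, $\alpha>0$, $A\in L(\mathcal{Y},\mathcal{W}^* )$ continuously invertible, $B\in L(\mathcal{U},\mathcal{W}^* )$, $C\in L(\mathcal{Y},\mathcal{G})$, and let $\mathcal{R}_\alpha=\frac\alpha2\|\cdot\|_\mathcal{U}^2$ and $J_\alpha(u,y)=\frac12\|Cy-g^\delta\|_\mathcal{G}^2+\mathcal{R}_\alpha(u)$. Let $\mathcal{U}_h\subset\mathcal{U}$, $\mathcal{Y}_h\subset\mathcal{Y}$, $\mathcal{W}_h\subset\mathcal{W}$ be finite-dimensional subspaces. Let $(\bar u,\bar y)$ minimize $J_\alpha(u,y)$ over $\mathcal{U}\times\mathcal{Y}$ subject to $Ay=Bu$, and let $(\bar u_h,\bar y_h)$ minimize $J_\alpha$ over $\mathcal{U}_h\times\mathcal{Y}_h$ subject to $\langle Ay-Bu,w_h\rangle_{\mathcal{W}^*,\mathcal{W}}=0$ for all $w_h\in\mathcal{W}_h$, with $\bar w_h\in\mathcal{W}_h$ such that $(\bar u_h,\bar y_h,\bar w_h)$ satisfies the discrete optimality system $$\langle C^*(C\bar y_h-g^\delta)+A^*\bar w_h,y_h\rangle_{\mathcal{Y}^*,\mathcal{Y}}=0\ \ \forall y_h\in\mathcal{Y}_h,\qquad \alpha\bar u_h-P_{\mathcal{U}_h}B^*\bar w_h=0,\qquad \langle A\bar y_h-B\bar u_h,w_h\rangle_{\mathcal{W}^*,\mathcal{W}}=0\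 \ \forall w_h\in\mathcal{W}_h.$$ Define the residuals $$\rho_w:=C^*(C\bar y_h-g^\delta)+A^*\bar w_h\in\mathcal{Y}^*,\qquad \rho_u:=\alpha\bar u_h-B^*\bar w_h\in\mathcal{U},\qquad \rho_y:=A\bar y_h-B\bar u_h\in\mathcal{W}^*.$$ Let $\sigma,\gamma$ satisfy either ($\sigma=4$ and $\gamma\ge2$) or ($\sigma>4$ and $\gamma>\frac{2\sigma}{\sigma+\sqrt{\sigma^2-4\sigma}}$). Then $$\alpha\|\bar u_h-\bar u\|_\mathcal{U}^2+\|C\bar y_h-C\bar y\|_\mathcal{G}^2\le\frac\gamma\alpha\|B^*(A^* )^{-1}\rho_w+\rho_u\|_\mathcal{U}^2+\sigma\|CA^{-1}\rho_y\|_\mathcal{G}^2,$$ $$J_\alpha(\bar u_h,\bar y_h)-J_\alpha(\bar u,\bar y)\le\frac1{2\alpha}\|B^*(A^* )^{-1}\rho_w+\rho_u\|_\mathcal{U}^2+(C\bar y_h-g^\delta,CA^{-1}\rho_y)_\mathcal{G}.$$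
   Context: Adjoints: $A^*\in L(\mathcal{W},\mathcal{Y}^* )$ with $\langle Ay,w\rangle_{\mathcal{W}^*,\mathcal{W}}=\langle y,A^*w\rangle_{\mathcal{Y},\mathcal{Y}^*}$; $B^*\in L(\mathcal{W},\mathcal{U})$ with $\langle Bu,w\rangle_{\mathcal{W}^*,\mathcal{W}}=(u,B^*w)_\mathcal{U}$; $C^*\in L(\mathcal{G},\mathcal{Y}^* )$ with $(Cy,g)_\mathcal{G}=\langle y,C^*g\rangle_{\mathcal{Y},\mathcal{Y}^*}$. $P_{\mathcal{U}_h}$ is the orthogonal projection of $\mathcal{U}$ onto $\mathcal{U}_h$. *)

theory Defs
  imports "HOL-Analysis.Analysis"
begin

text \<open>Dual of a normed space X is modelled as the space of bounded linear functionals
  X \<Rightarrow>L real. The dual pairing <x, f> is blinfun_apply f x.\<close>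

definition reflexive_space :: "'a::real_normed_vector itself \<Rightarrow> bool" where
  "reflexive_space _ \<longleftrightarrow>
     (\<forall>\<phi> :: ('a \<Rightarrow>\<^sub>L real) \<Rightarrow>\<^sub>L real. \<exists>x::'a. \<forall>f. blinfun_apply \<phi> f = blinfun_apply f x)"

definition fd_subspace :: "'a::real_vector set \<Rightarrow> bool" where
  "fd_subspace S \<longleftrightarrow> subspace S \<and> (\<exists>B. finite B \<and> S = span B)"

definition orth_proj :: "'a::real_inner set \<Rightarrow> 'a \<Rightarrow> 'a" where
  "orth_proj S x = (THE p. p \<in> S \<and> (\<forall>v\<in>S. inner (x - p) v = 0))"

definition adjA :: "('y::real_normed_vector \<Rightarrow>\<^sub>L ('w::real_normed_vector \<Rightarrow>\<^sub>L real)) \<Rightarrow> 'w \<Rightarrow> ('y \<Rightarrow>\<^sub>L real)" where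
  "adjA A w = Blinfun (\<lambda>y. blinfun_apply (blinfun_apply A y) w)"

definition adjC :: "('y::real_normed_vector \<Rightarrow>\<^sub>L 'g::real_inner) \<Rightarrow> 'g \<Rightarrow> ('y \<Rightarrow>\<^sub>L real)" where
  "adjC C g = Blinfun (\<lambda>y. inner (blinfun_apply C y) g)"

definition Jalpha :: "real \<Rightarrow> ('y::real_normed_vector \<Rightarrow>\<^sub>L 'g::real_inner) \<Rightarrow> 'g \<Rightarrow> 'u::real_inner \<Rightarrow> 'y \<Rightarrow> real" where
  "Jalpha \<alpha> C g u y = (1/2) * (norm (blinfun_apply C y - g))^2 + (\<alpha>/2) * (norm u)^2"

end

theory Submission
  imports Defs
begin

text \<open>The estimate holds for an arbitrary triple \<open>(uh, yh, wbar)\<close>: the discrete optimality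
  system only serves to make the residuals small.  Write \<open>e = uh - ubar\<close>, \<open>S v = C A\<^sup>-\<^sup>1 B v\<close> and
  \<open>z = B\<^sup>*(A\<^sup>*)\<^sup>-\<^sup>1\<rho>w + \<rho>u\<close>.  Unwinding the adjoints, \<open>(z, v) = (C yh - g, S v) + \<alpha> (uh, v)\<close>,
  while the continuous minimiser satisfies \<open>(C ybar - g, S v) + \<alpha> (ubar, v) = 0\<close>; and the
  state equation gives \<open>C yh - C ybar = C A\<^sup>-\<^sup>1\<rho>y + S e\<close>.  Subtracting yields the energy identity
  \<open>\<alpha>\<parallel>e\<parallel>\<^sup>2 + \<parallel>C yh - C ybar\<parallel>\<^sup>2 = (z, e) + (C yh - C ybar, C A\<^sup>-\<^sup>1\<rho>y)\<close>, and both bounds follow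
  from Young's inequality.  In particular the hypothesis on \<open>\<sigma>, \<gamma>\<close> is only used through
  \<open>\<sigma>, \<gamma> \<ge> 1\<close>: the argument gives the first bound already with \<open>\<sigma> = \<gamma> = 1\<close>.\<close>

lemma adjA_apply: "blinfun_apply (adjA A w) y = blinfun_apply (blinfun_apply A y) w"
  unfolding adjA_def
  by (subst bounded_linear_Blinfun_apply)
    (simp_all add: bounded_linear_compose[OF blinfun.bounded_linear_left blinfun.bounded_linear_right,
        unfolded o_def])

lemma adjC_apply: "blinfun_apply (adjC C g) y = inner (blinfun_apply C y) g"
  unfolding adjC_def
  by (subst bounded_linear_Blinfun_apply)
    (simp_all add: bounded_linear_compose[OF bounded_linear_inner_left blinfun.bounded_linear_right,
        unfolded o_def])

lemma inner_le_Young: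
  fixes x y :: "'a::real_inner"
  assumes "\<alpha> > 0"
  shows "inner x y \<le> (norm x)\<^sup>2 / (2 * \<alpha>) + \<alpha> * (norm y)\<^sup>2 / 2"
proof -
  have "0 \<le> (norm (x - \<alpha> *\<^sub>R y))\<^sup>2" by simp
  also have "\<dots> = (norm x)\<^sup>2 - 2 * \<alpha> * inner x y + \<alpha>\<^sup>2 * (norm y)\<^sup>2"
    unfolding power2_norm_eq_inner
    by (simp add: inner_diff_left inner_diff_right inner_commute power2_eq_square)
  finally show ?thesis using assms by (simp add: field_simps power2_eq_square)
qed

lemma linear_coeff_zero_if_quadratic_nonneg:
  fixes L Q :: real
  assumes "0 \<le> Q" and "\<forall>t. 0 \<le> t * L + t\<^sup>2 * Q"
  shows "L = 0"
proof (rule ccontr)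
  assume "L \<noteq> 0"
  define t where "t = - L / (Q + 1)"
  have tQ: "t * (Q + 1) = - L" using \<open>0 \<le> Q\<close> unfolding t_def by simp
  have "(t * L + t\<^sup>2 * Q) * (Q + 1)\<^sup>2 = (t * (Q + 1)) * L * (Q + 1) + (t * (Q + 1))\<^sup>2 * Q"
    by (simp add: power2_eq_square algebra_simps)
  also have "\<dots> = - L\<^sup>2" unfolding tQ by (simp add: power2_eq_square algebra_simps)
  finally have "(t * L + t\<^sup>2 * Q) * (Q + 1)\<^sup>2 = - L\<^sup>2" .
  moreover have "0 \<le> (t * L + t\<^sup>2 * Q) * (Q + 1)\<^sup>2" using assms(2) by simp
  ultimately show False using \<open>L \<noteq> 0\<close> by simp
qed

lemma Jalpha_minimiser_gradient_zero:
  fixes A :: "'y::real_normed_vector \<Rightarrow>\<^sub>L 'f::real_normed_vector"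
    and B :: "'u::real_inner \<Rightarrow>\<^sub>L 'f" and C :: "'y \<Rightarrow>\<^sub>L 'g::real_inner"
    and Ainv :: "'f \<Rightarrow>\<^sub>L 'y"
  assumes "0 \<le> \<alpha>" and "\<forall>f. A (Ainv f) = f" and "A ybar = B ubar"
    and "\<forall>u y. A y = B u \<longrightarrow> Jalpha \<alpha> C gd ubar ybar \<le> Jalpha \<alpha> C gd u y"
  shows "inner (C ybar - gd) (C (Ainv (B v))) + \<alpha> * inner ubar v = 0"
proof (rule linear_coeff_zero_if_quadratic_nonneg)
  let ?d = "C (Ainv (B v))"
  show "0 \<le> (inner ?d ?d + \<alpha> * inner v v) / 2" using assms(1) by simp
  show "\<forall>t. 0 \<le> t * (inner (C ybar - gd) ?d + \<alpha> * inner ubar v)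
                 + t\<^sup>2 * ((inner ?d ?d + \<alpha> * inner v v) / 2)"
  proof
    fix t :: real
    have "A (ybar + t *\<^sub>R Ainv (B v)) = B (ubar + t *\<^sub>R v)"
      using assms(2,3) by (simp add: blinfun.add_right blinfun.scaleR_right)
    hence "Jalpha \<alpha> C gd ubar ybar \<le> Jalpha \<alpha> C gd (ubar + t *\<^sub>R v) (ybar + t *\<^sub>R Ainv (B v))"
      using assms(4) by blast
    moreover have "C (ybar + t *\<^sub>R Ainv (B v)) - gd = (C ybar - gd) + t *\<^sub>R ?d"
      by (simp add: blinfun.add_right blinfun.scaleR_right)
    ultimately show "0 \<le> t * (inner (C ybar - gd) ?d + \<alpha> * inner ubar v)
                 + t\<^sup>2 * ((inner ?d ?d + \<alpha> * inner v v) / 2)"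
      unfolding Jalpha_def power2_norm_eq_inner
      by (simp add: inner_add_left inner_add_right inner_commute power2_eq_square
          algebra_simps add_divide_distrib)
  qed
qed

lemma residual_inner_eq:
  fixes A :: "'y::real_normed_vector \<Rightarrow>\<^sub>L ('w::real_normed_vector \<Rightarrow>\<^sub>L real)"
    and B :: "'u::real_inner \<Rightarrow>\<^sub>L ('w \<Rightarrow>\<^sub>L real)" and C :: "'y \<Rightarrow>\<^sub>L 'g::real_inner"
    and Ainv :: "('w \<Rightarrow>\<^sub>L real) \<Rightarrow>\<^sub>L 'y" and Asinv :: "('y \<Rightarrow>\<^sub>L real) \<Rightarrow>\<^sub>L 'w"
  assumes Ainv: "\<forall>f. A (Ainv f) = f" and Asinv: "\<forall>r. adjA A (Asinv r) = r"
    and Bs: "\<forall>u w. B u w = inner u (Bs w)"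
  shows "inner (Bs (Asinv (adjC C (C yh - gd) + adjA A wbar)) + (\<alpha> *\<^sub>R uh - Bs wbar)) v
         = inner (C yh - gd) (C (Ainv (B v))) + \<alpha> * inner uh v"
proof -
  let ?\<rho>w = "adjC C (C yh - gd) + adjA A wbar" and ?x = "Ainv (B v)"
  have "inner (Bs (Asinv ?\<rho>w)) v = A ?x (Asinv ?\<rho>w)"
    using Bs Ainv by (simp add: inner_commute)
  also have "\<dots> = ?\<rho>w ?x" using Asinv by (metis adjA_apply)
  also have "\<dots> = inner (C yh - gd) (C ?x) + inner v (Bs wbar)"
    using Ainv Bs by (simp add: adjA_apply adjC_apply blinfun.add_left inner_commute)
  finally have "inner (Bs (Asinv ?\<rho>w)) v = inner (C yh - gd) (C ?x) + inner v (Bs wbar)" .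
  thus ?thesis
    by (simp add: inner_add_left inner_diff_left inner_add_right inner_diff_right inner_commute)
qed

lemma state_error_eq:
  fixes A :: "'y::real_normed_vector \<Rightarrow>\<^sub>L 'f::real_normed_vector"
    and B :: "'u::real_normed_vector \<Rightarrow>\<^sub>L 'f" and Ainv :: "'f \<Rightarrow>\<^sub>L 'y"
  assumes "\<forall>y. Ainv (A y) = y" and "A ybar = B ubar"
  shows "yh - ybar = Ainv (A yh - B uh) + Ainv (B (uh - ubar))"
proof -
  have "yh - ybar = Ainv (A (yh - ybar))" using assms(1) by simp
  also have "A (yh - ybar) = (A yh - B uh) + B (uh - ubar)"
    using assms(2) by (simp add: blinfun.diff_right)
  finally show ?thesis by (simp add: blinfun.add_right)
qed

lemma a_posteriori_error_bound:
  fixes z uh ubar :: "'u::real_inner" and r rb b :: "'g::real_inner" and S :: "'u \<Rightarrow> 'g"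
  assumes "\<alpha> > 0"
    and residual: "\<And>v. inner z v = inner r (S v) + \<alpha> * inner uh v"
    and optimal: "\<And>v. inner rb (S v) + \<alpha> * inner ubar v = 0"
    and error: "r - rb = b + S (uh - ubar)"
  shows "\<alpha> * (norm (uh - ubar))\<^sup>2 + (norm (r - rb))\<^sup>2 \<le> (norm z)\<^sup>2 / \<alpha> + (norm b)\<^sup>2"
proof -
  define e a where "e = uh - ubar" and "a = r - rb"
  have "inner z e = inner a (S e) + \<alpha> * inner e e"
    using residual[of e] optimal[of e] unfolding a_def e_def
    by (simp add: algebra_simps)
  also have "S e = a - b" using error unfolding a_def e_def by simp
  finally have energy: "\<alpha> * (norm e)\<^sup>2 + (norm a)\<^sup>2 = inner z e + inner a b"
    by (simp add: inner_diff_right power2_norm_eq_inner)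
  have "inner z e \<le> (norm z)\<^sup>2 / (2 * \<alpha>) + \<alpha> * (norm e)\<^sup>2 / 2"
    using \<open>\<alpha> > 0\<close> by (rule inner_le_Young)
  moreover have "inner a b \<le> (norm a)\<^sup>2 / 2 + (norm b)\<^sup>2 / 2"
    using inner_le_Young[of 1 a b] by simp
  ultimately show ?thesis using energy unfolding a_def e_def by (simp add: field_simps)
qed

lemma a_posteriori_cost_bound:
  fixes z uh ubar :: "'u::real_inner" and r rb b :: "'g::real_inner" and S :: "'u \<Rightarrow> 'g"
  assumes "\<alpha> > 0"
    and residual: "\<And>v. inner z v = inner r (S v) + \<alpha> * inner uh v"
    and error: "r - rb = b + S (uh - ubar)"
  shows "(1/2 * (norm r)\<^sup>2 + \<alpha>/2 * (norm uh)\<^sup>2) - (1/2 * (norm rb)\<^sup>2 + \<alpha>/2 * (norm ubar)\<^sup>2)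
         \<le> (norm z)\<^sup>2 / (2 * \<alpha>) + inner r b" (is "?dJ \<le> _")
proof -
  define e a where "e = uh - ubar" and "a = r - rb"
  have "?dJ = inner r a + \<alpha> * inner uh e - (norm a)\<^sup>2 / 2 - \<alpha> * (norm e)\<^sup>2 / 2"
    unfolding a_def e_def power2_norm_eq_inner
    by (simp add: inner_diff_left inner_diff_right inner_commute field_simps)
  also have "inner r a + \<alpha> * inner uh e = inner z e + inner r b"
    using residual[of e] error unfolding a_def e_def by (simp add: inner_add_right)
  finally have cost: "?dJ = inner z e + inner r b - (norm a)\<^sup>2 / 2 - \<alpha> * (norm e)\<^sup>2 / 2" .
  have "inner z e \<le> (norm z)\<^sup>2 / (2 * \<alpha>) + \<alpha> * (norm e)\<^sup>2 / 2"
    using \<open>\<alpha> > 0\<close> by (rule inner_le_Young)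
  moreover have "0 \<le> (norm a)\<^sup>2" by simp
  ultimately show ?thesis using cost by linarith
qed

lemma admissible_weights_ge_one:
  fixes \<sigma> \<gamma> :: real
  assumes "(\<sigma> = 4 \<and> \<gamma> \<ge> 2) \<or> (\<sigma> > 4 \<and> \<gamma> > 2 * \<sigma> / (\<sigma> + sqrt (\<sigma>\<^sup>2 - 4 * \<sigma>)))"
  shows "1 \<le> \<sigma> \<and> 1 \<le> \<gamma>"
  using assms
proof
  assume \<sigma>\<gamma>: "\<sigma> > 4 \<and> \<gamma> > 2 * \<sigma> / (\<sigma> + sqrt (\<sigma>\<^sup>2 - 4 * \<sigma>))"
  have "sqrt (\<sigma>\<^sup>2 - 4 * \<sigma>) \<le> sqrt (\<sigma>\<^sup>2)" using \<sigma>\<gamma> by (intro real_sqrt_le_mono) simp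
  hence "\<sigma> + sqrt (\<sigma>\<^sup>2 - 4 * \<sigma>) \<le> 2 * \<sigma>" using \<sigma>\<gamma> by simp
  moreover have "4 * \<sigma> \<le> \<sigma>\<^sup>2" using \<sigma>\<gamma> by (simp add: power2_eq_square)
  hence "0 < \<sigma> + sqrt (\<sigma>\<^sup>2 - 4 * \<sigma>)" using \<sigma>\<gamma> by (simp add: add_pos_nonneg)
  ultimately have "1 \<le> 2 * \<sigma> / (\<sigma> + sqrt (\<sigma>\<^sup>2 - 4 * \<sigma>))" by simp
  with \<sigma>\<gamma> show ?thesis by linarith
qed simp
theorem proposition3p1:
  fixes A :: "'y::banach \<Rightarrow>\<^sub>L ('w::banach \<Rightarrow>\<^sub>L real)"
    and B :: "'u::{real_inner,complete_space} \<Rightarrow>\<^sub>L ('w \<Rightarrow>\<^sub>L real)"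
    and C :: "'y \<Rightarrow>\<^sub>L 'g::{real_inner,complete_space}"
    and Ainv :: "('w \<Rightarrow>\<^sub>L real) \<Rightarrow>\<^sub>L 'y"
    and Asinv :: "('y \<Rightarrow>\<^sub>L real) \<Rightarrow>\<^sub>L 'w"
    and Bs :: "'w \<Rightarrow> 'u"
    and gd :: 'g and \<alpha> \<sigma> \<gamma> :: real
    and Uh :: "'u set" and Yh :: "'y set" and Wh :: "'w set"
    and ubar uh :: 'u and ybar yh :: 'y and wbar :: 'w
  assumes reflW: "reflexive_space TYPE('w)" and reflY: "reflexive_space TYPE('y)"
    and alpha_pos: "\<alpha> > 0"
    and Ainv1: "\<forall>y. Ainv (A y) = y" and Ainv2: "\<forall>f. A (Ainv f) = f"
    and Asinv1: "\<forall>w. Asinv (adjA A w) = w" and Asinv2: "\<forall>r. adjA A (Asinv r) = r"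
    and Bs_adj: "\<forall>u w. blinfun_apply (B u) w = inner u (Bs w)"
    and Uh: "fd_subspace Uh" and Yh: "fd_subspace Yh" and Wh: "fd_subspace Wh"
    and cont_state: "A ybar = B ubar"
    and cont_min: "\<forall>u y. A y = B u \<longrightarrow> Jalpha \<alpha> C gd ubar ybar \<le> Jalpha \<alpha> C gd u y"
    and uh_in: "uh \<in> Uh" and yh_in: "yh \<in> Yh" and wbar_in: "wbar \<in> Wh"
    and disc_state: "\<forall>w\<in>Wh. blinfun_apply (A yh - B uh) w = 0"
    and disc_min: "\<forall>u\<in>Uh. \<forall>y\<in>Yh. (\<forall>w\<in>Wh. blinfun_apply (A y - B u) w = 0)
                      \<longrightarrow> Jalpha \<alpha> C gd uh yh \<le> Jalpha \<alpha> C gd u y"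
    and opt1: "\<forall>y\<in>Yh. blinfun_apply (adjC C (C yh - gd) + adjA A wbar) y = 0"
    and opt2: "\<alpha> *\<^sub>R uh - orth_proj Uh (Bs wbar) = 0"
    and opt3: "\<forall>w\<in>Wh. blinfun_apply (A yh - B uh) w = 0"
    and sg: "(\<sigma> = 4 \<and> \<gamma> \<ge> 2) \<or> (\<sigma> > 4 \<and> \<gamma> > 2 * \<sigma> / (\<sigma> + sqrt (\<sigma>^2 - 4 * \<sigma>)))"
  defines "\<rho>w \<equiv> adjC C (C yh - gd) + adjA A wbar"
    and "\<rho>u \<equiv> \<alpha> *\<^sub>R uh - Bs wbar"
    and "\<rho>y \<equiv> A yh - B uh"
  shows "\<alpha> * (norm (uh - ubar))^2 + (norm (C yh - C ybar))^2
           \<le> \<gamma> / \<alpha> * (norm (Bs (Asinv \<rho>w) + \<rho>u))^2 + \<sigma> * (norm (C (Ainv \<rho>y)))^2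
       \<and> Jalpha \<alpha> C gd uh yh - Jalpha \<alpha> C gd ubar ybar
           \<le> 1 / (2 * \<alpha>) * (norm (Bs (Asinv \<rho>w) + \<rho>u))^2 + inner (C yh - gd) (C (Ainv \<rho>y))"
proof -
  let ?S = "\<lambda>v. C (Ainv (B v))"
  define z where "z = Bs (Asinv \<rho>w) + \<rho>u"
  have residual: "inner z v = inner (C yh - gd) (?S v) + \<alpha> * inner uh v" for v
    unfolding z_def \<rho>w_def \<rho>u_def by (rule residual_inner_eq[OF Ainv2 Asinv2 Bs_adj])
  have optimal: "inner (C ybar - gd) (?S v) + \<alpha> * inner ubar v = 0" for v
    using alpha_pos by (intro Jalpha_minimiser_gradient_zero[OF _ Ainv2 cont_state cont_min]) simp
  have "yh - ybar = Ainv \<rho>y + Ainv (B (uh - ubar))"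
    unfolding \<rho>y_def by (rule state_error_eq[OF Ainv1 cont_state])
  hence "C (yh - ybar) = C (Ainv \<rho>y) + ?S (uh - ubar)" by (simp only: blinfun.add_right)
  hence error: "(C yh - gd) - (C ybar - gd) = C (Ainv \<rho>y) + ?S (uh - ubar)"
    by (simp add: blinfun.diff_right)
  have "1 \<le> \<sigma>" "1 \<le> \<gamma>" using admissible_weights_ge_one[OF sg] by auto
  have "\<alpha> * (norm (uh - ubar))\<^sup>2 + (norm (C yh - C ybar))\<^sup>2
        \<le> 1 / \<alpha> * (norm z)\<^sup>2 + 1 * (norm (C (Ainv \<rho>y)))\<^sup>2"
    using a_posteriori_error_bound[OF alpha_pos residual optimal error] by simp
  also have "\<dots> \<le> \<gamma> / \<alpha> * (norm z)\<^sup>2 + \<sigma> * (norm (C (Ainv \<rho>y)))\<^sup>2"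
    using \<open>1 \<le> \<sigma>\<close> \<open>1 \<le> \<gamma>\<close> alpha_pos
    by (intro add_mono mult_right_mono divide_right_mono) auto
  moreover have "Jalpha \<alpha> C gd uh yh - Jalpha \<alpha> C gd ubar ybar
      \<le> 1 / (2 * \<alpha>) * (norm z)\<^sup>2 + inner (C yh - gd) (C (Ainv \<rho>y))"
    unfolding Jalpha_def using a_posteriori_cost_bound[OF alpha_pos residual error] by simp
  ultimately show ?thesis unfolding z_def by simp
qed

end
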